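(* Let $\omega\ge 2$ and let $\Gamma$ be an $\omega$-clique regular finite simple graph with maximum degree $\Delta(\Gamma)$. Then every adjacency eigenvalue $\lambda$ of $C_\omega(\Gamma)$ satisfies \[-\omega\le\lambda\le\omega\left(\frac{\Delta(\Gamma)}{\omega-1}-1\right).\]
   Context: A graph is $\omega$-clique regular if it has a nonempty edge set and every edge lies in exactly one clique of order $\omega$. The $\omega$-clique graph $C_\omega(\Gamma)$ has as vertices the cliques of order $\omega$ of $\Gamma$, two distinct ones adjacent iff they have nonempty intersection. *)

theory Defs
  imports Main Complex_Main
begin

definition simple_graph :: "'a set \<Rightarrow> ('a \<Rightarrow> 'a \<Rightarrow> bool) \<Rightarrow> bool" where
  "simple_graph V E \<longleftrightarrow> finite V \<and> (\<forall>u v. E u v \<longrightarrow> u \<in> V \<and> v \<in> V)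
      \<and> (\<forall>u v. E u v \<longrightarrow> E v u) \<and> (\<forall>v. \<not> E v v)"

definition is_clique :: "'a set \<Rightarrow> ('a \<Rightarrow> 'a \<Rightarrow> bool) \<Rightarrow> 'a set \<Rightarrow> bool" where
  "is_clique V E K \<longleftrightarrow> K \<subseteq> V \<and> (\<forall>u\<in>K. \<forall>v\<in>K. u \<noteq> v \<longrightarrow> E u v)"

definition cliques_of_order :: "'a set \<Rightarrow> ('a \<Rightarrow> 'a \<Rightarrow> bool) \<Rightarrow> nat \<Rightarrow> 'a set set" where
  "cliques_of_order V E w = {K. is_clique V E K \<and> card K = w}"

definition clique_regular :: "'a set \<Rightarrow> ('a \<Rightarrow> 'a \<Rightarrow> bool) \<Rightarrow> nat \<Rightarrow> bool" where
  "clique_regular V E w \<longleftrightarrow> (\<exists>u v. E u v) \<and>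
     (\<forall>u v. E u v \<longrightarrow> (\<exists>!K. K \<in> cliques_of_order V E w \<and> u \<in> K \<and> v \<in> K))"

definition degree :: "'a set \<Rightarrow> ('a \<Rightarrow> 'a \<Rightarrow> bool) \<Rightarrow> 'a \<Rightarrow> nat" where
  "degree V E v = card {u \<in> V. E v u}"

definition max_degree :: "'a set \<Rightarrow> ('a \<Rightarrow> 'a \<Rightarrow> bool) \<Rightarrow> nat" where
  "max_degree V E = Max (degree V E ` V)"

definition clique_graph_adj :: "'a set \<Rightarrow> ('a \<Rightarrow> 'a \<Rightarrow> bool) \<Rightarrow> nat \<Rightarrow> 'a set \<Rightarrow> 'a set \<Rightarrow> bool" where
  "clique_graph_adj V E w K L \<longleftrightarrow> K \<in> cliques_of_order V E w \<and> L \<in> cliques_of_order V E w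
      \<and> K \<noteq> L \<and> K \<inter> L \<noteq> {}"

text \<open>Adjacency eigenvalue of a finite graph (vertex set W, adjacency R):
lambda is an eigenvalue of the 0/1 adjacency matrix A, i.e. A f = lambda f for some
nonzero f : W -> real (written out entrywise).\<close>
definition adj_eigenvalue :: "'b set \<Rightarrow> ('b \<Rightarrow> 'b \<Rightarrow> bool) \<Rightarrow> real \<Rightarrow> bool" where
  "adj_eigenvalue W R lam \<longleftrightarrow> (\<exists>f :: 'b \<Rightarrow> real. (\<exists>x\<in>W. f x \<noteq> 0) \<and>
      (\<forall>x\<in>W. (\<Sum>y\<in>{y\<in>W. R x y}. f y) = lam * f x))"

end

theory Submission
  imports Defs
begin

text \<open>Let \<open>N\<close> be the vertex-clique incidence matrix. Since two distinct \<open>\<omega>\<close>-cliques share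
at most one vertex, \<open>N\<^sup>T N = A + \<omega> I\<close> for the adjacency matrix \<open>A\<close> of \<open>C\<^sub>\<omega>(\<Gamma>)\<close>; as
\<open>N\<^sup>T N\<close> is positive semidefinite, every eigenvalue of \<open>A\<close> is at least \<open>-\<omega>\<close>.
Every eigenvalue is also bounded by the maximum degree of \<open>C\<^sub>\<omega>(\<Gamma>)\<close>. A vertex \<open>v\<close>
lies in at most \<open>\<Delta>/(\<omega>-1)\<close> cliques, because these cliques cover disjoint sets of
\<open>\<omega>-1\<close> neighbours of \<open>v\<close>; so a clique meets at most \<open>\<omega>(\<Delta>/(\<omega>-1) - 1)\<close> others.\<close>

lemma adj_eigenvector_quadratic_form:
  fixes f :: "'b \<Rightarrow> real"
  assumes "finite W" and "\<forall>x\<in>W. (\<Sum>y\<in>{y\<in>W. R x y}. f y) = lam * f x"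
  shows "(\<Sum>x\<in>W. \<Sum>y\<in>W. if R x y then f x * f y else 0) = lam * (\<Sum>x\<in>W. (f x)\<^sup>2)"
proof -
  have "(\<Sum>x\<in>W. \<Sum>y\<in>W. if R x y then f x * f y else 0)
      = (\<Sum>x\<in>W. f x * (\<Sum>y\<in>{y\<in>W. R x y}. f y))"
    using assms(1) by (simp add: sum.inter_filter sum_distrib_left if_distrib cong: if_cong)
  also have "\<dots> = (\<Sum>x\<in>W. lam * (f x)\<^sup>2)"
    using assms(2) by (intro sum.cong) (auto simp: power2_eq_square)
  finally show ?thesis by (simp add: sum_distrib_left)
qed

lemma adj_eigenvalue_abs_le_degree_bound:
  assumes "finite W" and "adj_eigenvalue W R lam"
    and deg: "\<And>x. x \<in> W \<Longrightarrow> real (card {y\<in>W. R x y}) \<le> d"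
  shows "\<bar>lam\<bar> \<le> d"
proof -
  obtain f :: "_ \<Rightarrow> real" where nonzero: "\<exists>x\<in>W. f x \<noteq> 0"
    and eig: "\<And>x. x \<in> W \<Longrightarrow> (\<Sum>y\<in>{y\<in>W. R x y}. f y) = lam * f x"
    using assms(2) unfolding adj_eigenvalue_def by blast
  define M where "M = Max ((\<lambda>x. \<bar>f x\<bar>) ` W)"
  have le_M: "\<bar>f x\<bar> \<le> M" if "x \<in> W" for x
    unfolding M_def using assms(1) that by auto
  have "M \<in> (\<lambda>x. \<bar>f x\<bar>) ` W"
    unfolding M_def using assms(1) nonzero by (intro Max_in) auto
  then obtain x0 where x0: "x0 \<in> W" and M_eq: "M = \<bar>f x0\<bar>"
    by blast
  have "M > 0"
    using nonzero le_M by fastforce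
  define N where "N = {y\<in>W. R x0 y}"
  have "\<bar>lam\<bar> * M = \<bar>\<Sum>y\<in>N. f y\<bar>"
    using eig[OF x0] M_eq unfolding N_def by (simp add: abs_mult)
  also have "\<dots> \<le> (\<Sum>y\<in>N. \<bar>f y\<bar>)"
    by (rule sum_abs)
  also have "\<dots> \<le> real (card N) * M"
    using sum_mono[of N "\<lambda>y. \<bar>f y\<bar>" "\<lambda>_. M"] le_M unfolding N_def by auto
  also have "\<dots> \<le> d * M"
    using deg[OF x0] \<open>M > 0\<close> unfolding N_def by simp
  finally show ?thesis
    using \<open>M > 0\<close> by simp
qed

lemma sum_card_inter_form_nonneg:
  fixes f :: "'a set \<Rightarrow> real"
  assumes "finite W" and "\<And>x. x \<in> W \<Longrightarrow> finite x"
  shows "0 \<le> (\<Sum>x\<in>W. \<Sum>y\<in>W. f x * f y * real (card (x \<inter> y)))"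
proof -
  let ?U = "\<Union>W"
  have "finite ?U"
    using assms by blast
  have card_eq: "real (card (x \<inter> y)) = (\<Sum>v\<in>?U. if v \<in> x \<inter> y then 1 else 0)"
    if "x \<in> W" for x y
  proof -
    have "{v \<in> ?U. v \<in> x \<inter> y} = x \<inter> y"
      using that by blast
    then show ?thesis
      using \<open>finite ?U\<close> by (simp add: sum.inter_filter[symmetric])
  qed
  have "(\<Sum>x\<in>W. \<Sum>y\<in>W. f x * f y * real (card (x \<inter> y)))
      = (\<Sum>x\<in>W. \<Sum>y\<in>W. \<Sum>v\<in>?U. if v \<in> x \<inter> y then f x * f y else 0)"
    by (intro sum.cong refl) (simp add: card_eq sum_distrib_left if_distrib cong: if_cong)
  also have "\<dots> = (\<Sum>v\<in>?U. \<Sum>x\<in>W. \<Sum>y\<in>W. if v \<in> x \<inter> y then f x * f y else 0)"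
    by (subst sum.swap) (simp add: sum.swap[of _ W ?U])
  also have "\<dots> = (\<Sum>v\<in>?U. (\<Sum>x\<in>W. if v \<in> x then f x else 0)\<^sup>2)"
    unfolding power2_eq_square sum_product by (intro sum.cong refl) auto
  finally show ?thesis
    by (simp add: sum_nonneg)
qed

text \<open>The condition on \<open>card (x \<inter> y)\<close> says that \<open>R\<close> is the line graph of a linear
\<open>c\<close>-uniform hypergraph with edge set \<open>W\<close>.\<close>

lemma adj_eigenvalue_ge_of_card_inter:
  assumes "finite W" and "\<And>x. x \<in> W \<Longrightarrow> finite x"
    and irrefl: "\<And>x. \<not> R x x"
    and card_inter: "\<And>x y. x \<in> W \<Longrightarrow> y \<in> W \<Longrightarrow>
      card (x \<inter> y) = (if x = y then c else if R x y then 1 else 0)"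
    and "adj_eigenvalue W R lam"
  shows "- real c \<le> lam"
proof -
  obtain f :: "'a set \<Rightarrow> real" where nonzero: "\<exists>x\<in>W. f x \<noteq> 0"
    and eig: "\<forall>x\<in>W. (\<Sum>y\<in>{y\<in>W. R x y}. f y) = lam * f x"
    using assms(5) unfolding adj_eigenvalue_def by blast
  define S where "S = (\<Sum>x\<in>W. (f x)\<^sup>2)"
  have "S > 0"
    using nonzero assms(1) unfolding S_def by (auto intro: sum_pos2)
  have "(\<Sum>x\<in>W. \<Sum>y\<in>W. f x * f y * real (card (x \<inter> y)))
      = (\<Sum>x\<in>W. \<Sum>y\<in>W. (if R x y then f x * f y else 0) + (if x = y then real c * (f x)\<^sup>2 else 0))"
    by (intro sum.cong refl) (auto simp: card_inter irrefl power2_eq_square)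
  also have "\<dots> = lam * S + real c * S"
    unfolding sum.distrib adj_eigenvector_quadratic_form[OF assms(1) eig] S_def
    using assms(1) by (simp add: sum_distrib_left)
  finally have "0 \<le> (lam + real c) * S"
    using sum_card_inter_form_nonneg[OF assms(1,2), of f] by (simp add: algebra_simps)
  then show ?thesis
    using \<open>S > 0\<close> by (simp add: zero_le_mult_iff)
qed

lemma finite_cliques_of_order:
  "finite V \<Longrightarrow> finite (cliques_of_order V E w)"
  by (rule finite_subset[of _ "Pow V"]) (auto simp: cliques_of_order_def is_clique_def)

lemma finite_clique_of_order:
  "finite V \<Longrightarrow> K \<in> cliques_of_order V E w \<Longrightarrow> finite K"
  by (auto simp: cliques_of_order_def is_clique_def intro: finite_subset)

lemma clique_regular_inter_eq:
  assumes "clique_regular V E w"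
    and K: "K \<in> cliques_of_order V E w" and L: "L \<in> cliques_of_order V E w"
    and "K \<noteq> L" and "u \<in> K \<inter> L" and "v \<in> K \<inter> L"
  shows "u = v"
proof (rule ccontr)
  assume "u \<noteq> v"
  then have "E u v"
    using K \<open>u \<in> K \<inter> L\<close> \<open>v \<in> K \<inter> L\<close> unfolding cliques_of_order_def is_clique_def by auto
  then show False
    using assms unfolding clique_regular_def by blast
qed

lemma clique_regular_card_inter:
  assumes "clique_regular V E w"
    and K: "K \<in> cliques_of_order V E w" and L: "L \<in> cliques_of_order V E w"
  shows "card (K \<inter> L) = (if K = L then w else if clique_graph_adj V E w K L then 1 else 0)"
proof -
  consider "K = L" | "K \<noteq> L" "K \<inter> L = {}" | u where "K \<noteq> L" "u \<in> K \<inter> L"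
    by blast
  then show ?thesis
  proof cases
    case 1
    then show ?thesis
      using K by (simp add: cliques_of_order_def)
  next
    case 2
    then show ?thesis
      by (simp add: clique_graph_adj_def)
  next
    case (3 u)
    then have "K \<inter> L = {u}"
      using clique_regular_inter_eq[OF assms] by blast
    with 3 show ?thesis
      using K L by (simp add: clique_graph_adj_def)
  qed
qed

lemma card_cliques_containing_mult_le_degree:
  assumes "clique_regular V E w" and "finite V"
  shows "card {L \<in> cliques_of_order V E w. v \<in> L} * (w - 1) \<le> degree V E v"
proof -
  let ?I = "{L \<in> cliques_of_order V E w. v \<in> L}"
  have "finite ?I"
    using finite_cliques_of_order[OF \<open>finite V\<close>] by simp
  have "card ?I * (w - 1) = (\<Sum>L\<in>?I. card (L - {v}))"
    by (simp add: cliques_of_order_def)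
  also have "\<dots> = card (\<Union>L\<in>?I. L - {v})"
  proof (rule card_UN_disjoint[symmetric])
    show "\<forall>L\<in>?I. \<forall>L'\<in>?I. L \<noteq> L' \<longrightarrow> (L - {v}) \<inter> (L' - {v}) = {}"
      using clique_regular_inter_eq[OF assms(1)] by blast
  qed (use \<open>finite ?I\<close> finite_clique_of_order[OF \<open>finite V\<close>] in auto)
  also have "\<dots> \<le> card {u \<in> V. E v u}"
    by (rule card_mono) (auto simp: \<open>finite V\<close> cliques_of_order_def is_clique_def)
  finally show ?thesis
    unfolding degree_def .
qed

lemma clique_graph_degree_le:
  assumes "w \<ge> 2" and "finite V" and "clique_regular V E w"
    and K: "K \<in> cliques_of_order V E w"
  shows "real (card {L \<in> cliques_of_order V E w. clique_graph_adj V E w K L})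
    \<le> real w * (real (max_degree V E) / (real w - 1) - 1)"
proof -
  let ?C = "cliques_of_order V E w"
  define others where "others v = {L \<in> ?C. v \<in> L \<and> L \<noteq> K}" for v
  have "finite ?C"
    by (rule finite_cliques_of_order[OF \<open>finite V\<close>])
  have "finite K"
    by (rule finite_clique_of_order[OF \<open>finite V\<close> K])
  have "card K = w" "K \<subseteq> V"
    using K by (auto simp: cliques_of_order_def is_clique_def)
  have others_le: "real (card (others v)) \<le> real (max_degree V E) / (real w - 1) - 1"
    if "v \<in> K" for v
  proof -
    have "{L \<in> ?C. v \<in> L} = insert K (others v)" "K \<notin> others v" "finite (others v)"
      using K that \<open>finite ?C\<close> unfolding others_def by auto
    then have "(card (others v) + 1) * (w - 1) \<le> degree V E v"
      using card_cliques_containing_mult_le_degree[OF assms(3) \<open>finite V\<close>, of v] by simp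
    also have "\<dots> \<le> max_degree V E"
      unfolding max_degree_def using \<open>finite V\<close> \<open>K \<subseteq> V\<close> that by auto
    finally have "real ((card (others v) + 1) * (w - 1)) \<le> real (max_degree V E)"
      by (simp only: of_nat_le_iff)
    moreover have "real (w - 1) = real w - 1"
      using assms(1) by simp
    ultimately have "(real (card (others v)) + 1) * (real w - 1) \<le> real (max_degree V E)"
      by (simp only: of_nat_mult of_nat_add of_nat_1)
    then show ?thesis
      using assms(1) by (simp add: field_simps)
  qed
  have "card {L \<in> ?C. clique_graph_adj V E w K L} \<le> card (\<Union>v\<in>K. others v)"
    by (rule card_mono) (auto simp: \<open>finite K\<close> \<open>finite ?C\<close> others_def clique_graph_adj_def)
  also have "\<dots> \<le> (\<Sum>v\<in>K. card (others v))"
    by (rule card_UN_le[OF \<open>finite K\<close>])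
  finally have "real (card {L \<in> ?C. clique_graph_adj V E w K L}) \<le> (\<Sum>v\<in>K. real (card (others v)))"
    by (simp flip: of_nat_sum)
  also have "\<dots> \<le> (\<Sum>v\<in>K. real (max_degree V E) / (real w - 1) - 1)"
    by (rule sum_mono) (rule others_le)
  finally show ?thesis
    using \<open>card K = w\<close> by simp
qed

theorem corollary2:
  fixes V :: "'a set" and E :: "'a \<Rightarrow> 'a \<Rightarrow> bool" and w :: nat and lam :: real
  assumes "w \<ge> 2"
    and "simple_graph V E"
    and "clique_regular V E w"
    and "adj_eigenvalue (cliques_of_order V E w) (clique_graph_adj V E w) lam"
  shows "- real w \<le> lam \<and> lam \<le> real w * (real (max_degree V E) / (real w - 1) - 1)"
proof
  have "finite V"
    using assms(2) unfolding simple_graph_def by blast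
  then have finite_cliques: "finite (cliques_of_order V E w)"
    by (rule finite_cliques_of_order)
  have "\<And>K. \<not> clique_graph_adj V E w K K"
    by (simp add: clique_graph_adj_def)
  then show "- real w \<le> lam"
    using adj_eigenvalue_ge_of_card_inter[OF finite_cliques _ _ _ assms(4)]
      finite_clique_of_order[OF \<open>finite V\<close>] clique_regular_card_inter[OF assms(3)] by blast
  have "\<bar>lam\<bar> \<le> real w * (real (max_degree V E) / (real w - 1) - 1)"
    using adj_eigenvalue_abs_le_degree_bound[OF finite_cliques assms(4)]
      clique_graph_degree_le[OF assms(1) \<open>finite V\<close> assms(3)] by blast
  then show "lam \<le> real w * (real (max_degree V E) / (real w - 1) - 1)"
    by simp
qed

end
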